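(* For every abstract storage device $D$, $\sigma(D)\le i(D)\cdot C(D)$.
   Context: An abstract storage device (ASD) is a pair $D=(\mathcal{S}_D,\mathcal{P}_D)$, $\mathcal{S}_D$ a finite set and $\mathcal{P}_D$ a finite family of partitions of $\mathcal{S}_D$. For a partition $\pi$ of $\mathcal{S}'$ and $\phi:\mathcal{S}\to\mathcal{S}'$, $\pi\circ\phi$ is the partition of $\mathcal{S}$ with $x,y$ in the same block iff $\phi(x),\phi(y)$ are in the same block of $\pi$; $\pi\preceq\rho$ means every block of $\pi$ lies in a block of $\rho$; $\wedge$ is the meet of partitions. $D\le D'$ means there exist $\phi:\mathcal{S}_D\to\mathcal{S}_{D'}$, $\alpha:\mathcal{P}_D\to\mathcal{P}_{D'}$ with $\alpha(\pi)\circ\phi\preceq\pi$ for all $\pi\in\mathcal{P}_D$; $D\equiv D'$ means $D\le D'$ and $D'\le D$. $C_m$ is the ASD with state space $\{1,\dots,m\}$ and partition set $\{\{\{1\},\dots,\{m\}\}\}$. Storage capacity: $C(D)=\max\{\log m: C_m\le D\}$ (log base 2). State complexity: $\sigma(D)=\min_{E\equiv D}\log|\mathcal{S}_E|$. $D$ is perfect if $\{\{s\}:s\in\mathcal{S}_D\}\in\mathcal{P}_D$; $D^{(k)}$ has state space $\mathcal{S}_D$ and partition set $\{\pi_1\wedge\cdots\wedge\pi_k:\pi_i\in\mathcal{P}_D\}$; the perfectness index $i(D)$ is the least $k\ge1$ with $D^{(k)}$ perfect, or $\infty$ if none exists. *)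

theory Defs
  imports "HOL-Library.Disjoint_Sets" "HOL-Library.Extended_Real"
begin

text \<open>An abstract storage device: a state space together with a family of partitions of it.
  A partition is represented as its set of blocks.\<close>

type_synonym 's asd = "'s set \<times> 's set set set"

definition states :: "'s asd \<Rightarrow> 's set" where "states D = fst D"
definition parts :: "'s asd \<Rightarrow> 's set set set" where "parts D = snd D"

definition is_asd :: "'s asd \<Rightarrow> bool" where
  "is_asd D \<longleftrightarrow> finite (states D) \<and> finite (parts D) \<and>
     (\<forall>\<pi>\<in>parts D. partition_on (states D) \<pi>)"

definition pullback :: "'a set \<Rightarrow> ('a \<Rightarrow> 'b) \<Rightarrow> 'b set set \<Rightarrow> 'a set set" where
  "pullback S \<phi> \<pi> = (\<lambda>B. {x\<in>S. \<phi> x \<in> B}) ` \<pi> - {{}}"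

definition refines :: "'a set set \<Rightarrow> 'a set set \<Rightarrow> bool" (infix "\<preceq>\<^sub>P" 50) where
  "\<pi> \<preceq>\<^sub>P \<rho> \<longleftrightarrow> (\<forall>B\<in>\<pi>. \<exists>B'\<in>\<rho>. B \<subseteq> B')"

definition meet :: "'a set set \<Rightarrow> 'a set set \<Rightarrow> 'a set set" where
  "meet \<pi> \<rho> = {B \<inter> B' | B B'. B \<in> \<pi> \<and> B' \<in> \<rho>} - {{}}"

definition asd_le :: "'s asd \<Rightarrow> 't asd \<Rightarrow> bool" where
  "asd_le D D' \<longleftrightarrow> (\<exists>\<phi> \<alpha>. \<phi> \<in> states D \<rightarrow> states D' \<and>
     (\<forall>\<pi>\<in>parts D. \<alpha> \<pi> \<in> parts D' \<and> pullback (states D) \<phi> (\<alpha> \<pi>) \<preceq>\<^sub>P \<pi>))"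

definition asd_equiv :: "'s asd \<Rightarrow> 't asd \<Rightarrow> bool" where
  "asd_equiv D D' \<longleftrightarrow> asd_le D D' \<and> asd_le D' D"

definition Cdev :: "nat \<Rightarrow> nat asd" where
  "Cdev m = ({1..m}, {(\<lambda>i. {i}) ` {1..m}})"

definition capacity :: "'s asd \<Rightarrow> real" where
  "capacity D = Max {log 2 (real m) | m. m \<ge> 1 \<and> asd_le (Cdev m) D}"

text \<open>State complexity; competitor devices range over devices with states in \<open>nat\<close>
  (every finite state space can be relabelled into \<open>nat\<close>).\<close>
definition state_complexity :: "'s asd \<Rightarrow> real" where
  "state_complexity D =
     Inf {log 2 (real (card (states E))) | E :: nat asd. is_asd E \<and> asd_equiv E D}"

definition perfect :: "'s asd \<Rightarrow> bool" where
  "perfect D \<longleftrightarrow> (\<lambda>s. {s}) ` states D \<in> parts D"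

fun meet_list :: "'a set set list \<Rightarrow> 'a set set" where
  "meet_list [] = {}"
| "meet_list [\<pi>] = \<pi>"
| "meet_list (\<pi> # \<rho> # \<pi>s) = meet \<pi> (meet_list (\<rho> # \<pi>s))"

definition power_dev :: "'s asd \<Rightarrow> nat \<Rightarrow> 's asd" where
  "power_dev D k = (states D,
     {meet_list \<pi>s | \<pi>s. length \<pi>s = k \<and> set \<pi>s \<subseteq> parts D})"

definition perf_index :: "'s asd \<Rightarrow> ereal" where
  "perf_index D = (if \<exists>k\<ge>1. perfect (power_dev D k)
                    then ereal (real (LEAST k. k \<ge> 1 \<and> perfect (power_dev D k)))
                    else \<infinity>)"

end

theory Submission
  imports Defs
begin

text \<open>Relabelling the states of \<open>D\<close> by \<open>{0..<|S|}\<close> yields an equivalent device, so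
  \<open>\<sigma>(D) \<le> log |S|\<close>. Picking one state in each block of a partition \<open>\<pi>\<close> of \<open>D\<close> shows
  \<open>C\<^sub>m \<le> D\<close> for \<open>m = |\<pi>|\<close>, so every partition has at most \<open>2 powr C(D)\<close> blocks. If the meet
  of \<open>k\<close> partitions is discrete, then \<open>|S| \<le> (2 powr C(D))^k\<close>. When \<open>i(D) = \<infinity>\<close> the bound
  has content only for \<open>C(D) = 0\<close>: then every partition is trivial and \<open>D\<close> is equivalent
  to a one-state device.\<close>

lemma partition_on_pullback:
  assumes "partition_on S \<pi>" "\<phi> \<in> A \<rightarrow> S"
  shows "partition_on A (pullback A \<phi> \<pi>)"
proof -
  have "A \<inter> \<phi> -` S = A" using assms(2) by auto
  moreover have "pullback A \<phi> \<pi> = (\<inter>) A ` ((-`) \<phi> ` \<pi> - {{}}) - {{}}"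
    unfolding pullback_def by auto
  ultimately show ?thesis
    using partition_on_restrict[OF partition_on_vimage[OF assms(1)], of A \<phi>] by simp
qed

lemma image_diff_empty_eq:
  assumes "f {} = {}"
  shows "f ` (X - {{}}) - {{}} = f ` X - {{}}"
  using assms by auto

lemma pullback_pullback:
  assumes "\<psi> \<in> S \<rightarrow> A"
  shows "pullback S \<psi> (pullback A \<phi> \<pi>) = pullback S (\<phi> \<circ> \<psi>) \<pi>"
proof -
  have "{x\<in>S. \<psi> x \<in> {y\<in>A. \<phi> y \<in> B}} = {x\<in>S. \<phi> (\<psi> x) \<in> B}" for B
    using assms by auto
  then show ?thesis
    unfolding pullback_def by (simp add: image_diff_empty_eq image_image)
qed

lemma pullback_refines:
  assumes "\<And>x B. x \<in> S \<Longrightarrow> B \<in> \<pi> \<Longrightarrow> f x \<in> B \<Longrightarrow> x \<in> B"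
  shows "pullback S f \<pi> \<preceq>\<^sub>P \<pi>"
  using assms unfolding pullback_def refines_def by blast

lemma partition_on_block_unique:
  assumes "partition_on S \<pi>" "B \<in> \<pi>" "B' \<in> \<pi>" "x \<in> B" "x \<in> B'"
  shows "B = B'"
  using partition_onD2[OF assms(1)] assms(2-) by (auto simp: disjoint_def)

lemma partition_on_parts:
  "is_asd D \<Longrightarrow> \<pi> \<in> parts D \<Longrightarrow> partition_on (states D) \<pi>"
  by (simp add: is_asd_def)

lemma finite_part:
  "is_asd D \<Longrightarrow> \<pi> \<in> parts D \<Longrightarrow> finite \<pi>"
  using finite_elements[of "states D" \<pi>] by (simp add: is_asd_def)

lemma card_part_pos:
  assumes "is_asd D" "\<pi> \<in> parts D" "states D \<noteq> {}"
  shows "0 < card \<pi>"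
  using finite_part[OF assms(1,2)] partition_onD1[OF partition_on_parts[OF assms(1,2)]] assms(3)
  by (auto simp: card_gt_0_iff)

definition pullback_dev :: "'a set \<Rightarrow> ('a \<Rightarrow> 's) \<Rightarrow> 's asd \<Rightarrow> 'a asd" where
  "pullback_dev A \<phi> D = (A, pullback A \<phi> ` parts D)"

lemma states_pullback_dev [simp]: "states (pullback_dev A \<phi> D) = A"
  and parts_pullback_dev [simp]: "parts (pullback_dev A \<phi> D) = pullback A \<phi> ` parts D"
  by (simp_all add: pullback_dev_def states_def parts_def)

lemma is_asd_pullback_dev:
  assumes "is_asd D" "finite A" "\<phi> \<in> A \<rightarrow> states D"
  shows "is_asd (pullback_dev A \<phi> D)"
  using assms partition_on_pullback[OF _ assms(3)] by (auto simp: is_asd_def)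

lemma pullback_dev_le:
  assumes "\<phi> \<in> A \<rightarrow> states D"
  shows "asd_le (pullback_dev A \<phi> D) D"
  unfolding asd_le_def
proof (intro exI conjI ballI)
  show "\<phi> \<in> states (pullback_dev A \<phi> D) \<rightarrow> states D" using assms by simp
  fix \<rho> assume "\<rho> \<in> parts (pullback_dev A \<phi> D)"
  then have "\<rho> \<in> pullback A \<phi> ` parts D" by simp
  then show "inv_into (parts D) (pullback A \<phi>) \<rho> \<in> parts D"
    and "pullback (states (pullback_dev A \<phi> D)) \<phi> (inv_into (parts D) (pullback A \<phi>) \<rho>) \<preceq>\<^sub>P \<rho>"
    by (auto simp: inv_into_into f_inv_into_f refines_def)
qed

lemma le_pullback_dev:
  assumes "\<psi> \<in> states D \<rightarrow> A"
    and "\<And>\<pi> x B. \<pi> \<in> parts D \<Longrightarrow> x \<in> states D \<Longrightarrow> B \<in> \<pi> \<Longrightarrow> \<phi> (\<psi> x) \<in> B \<Longrightarrow> x \<in> B"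
  shows "asd_le D (pullback_dev A \<phi> D)"
  unfolding asd_le_def
proof (intro exI conjI ballI)
  show "\<psi> \<in> states D \<rightarrow> states (pullback_dev A \<phi> D)" using assms(1) by simp
  fix \<pi> assume \<pi>: "\<pi> \<in> parts D"
  then show "pullback A \<phi> \<pi> \<in> parts (pullback_dev A \<phi> D)" by simp
  show "pullback (states D) \<psi> (pullback A \<phi> \<pi>) \<preceq>\<^sub>P \<pi>"
    unfolding pullback_pullback[OF assms(1)] using assms(2)[OF \<pi>] by (intro pullback_refines) auto
qed

lemma state_complexity_le_equiv:
  fixes E :: "nat asd"
  assumes "is_asd E" "asd_equiv E D"
  shows "state_complexity D \<le> log 2 (real (card (states E)))"
  unfolding state_complexity_def
proof (rule cInf_lower)
  show "log 2 (real (card (states E)))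
    \<in> {log 2 (real (card (states E))) | E :: nat asd. is_asd E \<and> asd_equiv E D}"
    using assms by blast
  have "0 \<le> log 2 (real n)" for n :: nat
    by (cases "n = 0") (auto simp: log_def)
  then show "bdd_below {log 2 (real (card (states E))) | E :: nat asd. is_asd E \<and> asd_equiv E D}"
    by (intro bdd_belowI[where m = 0]) blast
qed

lemma state_complexity_le_pullback_dev:
  fixes A :: "nat set"
  assumes "is_asd D" "finite A" "\<phi> \<in> A \<rightarrow> states D" "\<psi> \<in> states D \<rightarrow> A"
    and "\<And>\<pi> x B. \<pi> \<in> parts D \<Longrightarrow> x \<in> states D \<Longrightarrow> B \<in> \<pi> \<Longrightarrow> \<phi> (\<psi> x) \<in> B \<Longrightarrow> x \<in> B"
  shows "state_complexity D \<le> log 2 (real (card A))"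
proof -
  have "asd_equiv (pullback_dev A \<phi> D) D"
    unfolding asd_equiv_def using pullback_dev_le[OF assms(3)] le_pullback_dev[OF assms(4)] assms(5)
    by blast
  then show ?thesis
    using state_complexity_le_equiv[OF is_asd_pullback_dev[OF assms(1-3)]] by simp
qed

lemma state_complexity_le_log_card_states:
  assumes "is_asd D"
  shows "state_complexity D \<le> log 2 (real (card (states D)))"
proof -
  have "finite (states D)" using assms by (simp add: is_asd_def)
  then obtain h where h: "bij_betw h {0..<card (states D)} (states D)"
    using ex_bij_betw_nat_finite by blast
  let ?h' = "inv_into {0..<card (states D)} h"
  have "h \<in> {0..<card (states D)} \<rightarrow> states D" "?h' \<in> states D \<rightarrow> {0..<card (states D)}"
    using bij_betw_imp_funcset[OF h] bij_betw_imp_funcset[OF bij_betw_inv_into[OF h]] by blast+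
  moreover have "h (?h' x) = x" if "x \<in> states D" for x
    using h that by (simp add: bij_betw_inv_into_right)
  ultimately have "state_complexity D \<le> log 2 (real (card {0..<card (states D)}))"
    by (intro state_complexity_le_pullback_dev[OF assms]) auto
  then show ?thesis by simp
qed

lemma state_complexity_le_zero_if_parts_trivial:
  assumes "is_asd D" "s \<in> states D" "\<And>\<pi>. \<pi> \<in> parts D \<Longrightarrow> \<pi> = {states D}"
  shows "state_complexity D \<le> 0"
  using state_complexity_le_pullback_dev[OF assms(1), of "{0}" "\<lambda>_. s" "\<lambda>_. 0"] assms(2,3)
  by auto

lemma states_Cdev [simp]: "states (Cdev m) = {1..m}"
  and parts_Cdev [simp]: "parts (Cdev m) = {(\<lambda>i. {i}) ` {1..m}}"
  by (simp_all add: Cdev_def states_def parts_def)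

lemma pullback_refines_singletons_iff:
  "pullback I \<phi> \<pi> \<preceq>\<^sub>P (\<lambda>i. {i}) ` I \<longleftrightarrow> (\<forall>B\<in>\<pi>. \<forall>i\<in>I. \<forall>j\<in>I. \<phi> i \<in> B \<longrightarrow> \<phi> j \<in> B \<longrightarrow> i = j)"
  (is "?refines \<longleftrightarrow> ?unique")
proof
  assume ?refines
  show ?unique
  proof (intro ballI impI)
    fix B i j assume "B \<in> \<pi>" "i \<in> I" "j \<in> I" "\<phi> i \<in> B" "\<phi> j \<in> B"
    then have "{x\<in>I. \<phi> x \<in> B} \<in> pullback I \<phi> \<pi>" "i \<in> {x\<in>I. \<phi> x \<in> B}" "j \<in> {x\<in>I. \<phi> x \<in> B}"
      unfolding pullback_def by auto
    moreover obtain l where "{x\<in>I. \<phi> x \<in> B} \<subseteq> {l}"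
      using \<open>?refines\<close> calculation(1) unfolding refines_def by blast
    ultimately show "i = j" by blast
  qed
next
  assume ?unique
  show ?refines
    unfolding refines_def
  proof
    fix C assume "C \<in> pullback I \<phi> \<pi>"
    then obtain B i where "B \<in> \<pi>" "C = {x\<in>I. \<phi> x \<in> B}" "i \<in> C"
      unfolding pullback_def by auto
    with \<open>?unique\<close> have "C \<subseteq> {i}" "i \<in> I" by auto
    then show "\<exists>B'\<in>(\<lambda>i. {i}) ` I. C \<subseteq> B'" by blast
  qed
qed

lemma Cdev_le_imp_le_card_states:
  assumes "is_asd D" "asd_le (Cdev m) D"
  shows "m \<le> card (states D)"
proof -
  obtain \<phi> \<alpha> where \<phi>: "\<phi> \<in> {1..m} \<rightarrow> states D"
    and p: "\<alpha> ((\<lambda>i. {i}) ` {1..m}) \<in> parts D"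
    and r: "pullback {1..m} \<phi> (\<alpha> ((\<lambda>i. {i}) ` {1..m})) \<preceq>\<^sub>P (\<lambda>i. {i}) ` {1..m}"
    using assms(2) by (auto simp: asd_le_def)
  have "inj_on \<phi> {1..m}"
  proof (rule inj_onI)
    fix i j assume ij: "i \<in> {1..m}" "j \<in> {1..m}" "\<phi> i = \<phi> j"
    obtain B where B: "B \<in> \<alpha> ((\<lambda>i. {i}) ` {1..m})" "\<phi> i \<in> B"
      using \<phi> ij(1) partition_onD1[OF partition_on_parts[OF assms(1) p]] by blast
    moreover have "\<phi> j \<in> B" using B(2) ij(3) by simp
    ultimately show "i = j"
      using r[unfolded pullback_refines_singletons_iff] ij(1,2) by blast
  qed
  then have "card {1..m} \<le> card (states D)"
    using \<phi> assms(1) by (intro card_inj_on_le) (auto simp: is_asd_def)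
  then show ?thesis by simp
qed

lemma Cdev_card_part_le:
  assumes "is_asd D" "\<pi> \<in> parts D"
  shows "asd_le (Cdev (card \<pi>)) D"
proof -
  let ?I = "{1..card \<pi>}"
  have part: "partition_on (states D) \<pi>" using partition_on_parts[OF assms] .
  obtain g where g: "bij_betw g ?I \<pi>"
    using ex_bij_betw_nat_finite_1[OF finite_part[OF assms]] by blast
  define \<phi> where "\<phi> i = (SOME x. x \<in> g i)" for i
  have \<phi>_in: "\<phi> i \<in> g i" if "i \<in> ?I" for i
  proof -
    have "g i \<noteq> {}" using partition_onD3[OF part] bij_betw_apply[OF g that] by auto
    then show ?thesis by (simp add: \<phi>_def some_in_eq)
  qed
  have "\<phi> i \<in> states D" if "i \<in> ?I" for i
    using \<phi>_in[OF that] bij_betw_apply[OF g that] partition_onD1[OF part] by auto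
  then have "\<phi> \<in> ?I \<rightarrow> states D" by blast
  moreover have r: "pullback ?I \<phi> \<pi> \<preceq>\<^sub>P (\<lambda>i. {i}) ` ?I"
    unfolding pullback_refines_singletons_iff
  proof (intro ballI impI)
    fix B i j assume B: "B \<in> \<pi>" and ij: "i \<in> ?I" "j \<in> ?I" "\<phi> i \<in> B" "\<phi> j \<in> B"
    have "g i = B" "g j = B"
      using partition_on_block_unique[OF part bij_betw_apply[OF g ij(1)] B \<phi>_in[OF ij(1)] ij(3)]
        partition_on_block_unique[OF part bij_betw_apply[OF g ij(2)] B \<phi>_in[OF ij(2)] ij(4)] .
    then show "i = j"
      using inj_onD[OF bij_betw_imp_inj_on[OF g]] ij(1,2) by metis
  qed
  ultimately show ?thesis
    unfolding asd_le_def states_Cdev parts_Cdev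
  proof (intro exI conjI ballI)
    fix \<rho> assume "\<rho> \<in> {(\<lambda>i. {i}) ` ?I}"
    then show "\<pi> \<in> parts D" "pullback ?I \<phi> \<pi> \<preceq>\<^sub>P \<rho>" using assms(2) r by auto
  qed
qed

lemma log_card_part_le_capacity:
  assumes "is_asd D" "\<pi> \<in> parts D" "states D \<noteq> {}"
  shows "log 2 (real (card \<pi>)) \<le> capacity D"
proof -
  let ?X = "{log 2 (real m) | m. m \<ge> 1 \<and> asd_le (Cdev m) D}"
  have "?X \<subseteq> (\<lambda>m. log 2 (real m)) ` {1..card (states D)}"
    using Cdev_le_imp_le_card_states[OF assms(1)] by auto
  then have "finite ?X" by (rule finite_subset) simp
  moreover have "log 2 (real (card \<pi>)) \<in> ?X"
    using Cdev_card_part_le[OF assms(1,2)] card_part_pos[OF assms] by (auto simp: Suc_le_eq)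
  ultimately show ?thesis unfolding capacity_def by (rule Max_ge)
qed

lemma card_part_le_powr_capacity:
  assumes "is_asd D" "\<pi> \<in> parts D" "states D \<noteq> {}"
  shows "real (card \<pi>) \<le> 2 powr capacity D"
proof -
  have "real (card \<pi>) = 2 powr log 2 (real (card \<pi>))"
    using card_part_pos[OF assms] by simp
  also have "\<dots> \<le> 2 powr capacity D"
    using log_card_part_le_capacity[OF assms] by simp
  finally show ?thesis .
qed

lemma capacity_nonneg:
  assumes "is_asd D" "states D \<noteq> {}" "parts D \<noteq> {}"
  shows "0 \<le> capacity D"
proof -
  obtain \<pi> where \<pi>: "\<pi> \<in> parts D" using assms(3) by blast
  have "0 \<le> log 2 (real (card \<pi>))"
    using card_part_pos[OF assms(1) \<pi> assms(2)] by simp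
  also have "\<dots> \<le> capacity D" using log_card_part_le_capacity[OF assms(1) \<pi> assms(2)] .
  finally show ?thesis .
qed

lemma part_eq_states_if_capacity_zero:
  assumes "is_asd D" "states D \<noteq> {}" "capacity D = 0" "\<pi> \<in> parts D"
  shows "\<pi> = {states D}"
proof -
  have "card \<pi> = 1"
    using card_part_le_powr_capacity[OF assms(1,4,2)] card_part_pos[OF assms(1,4,2)] assms(3)
    by simp
  then obtain B where "\<pi> = {B}" by (auto simp: card_Suc_eq)
  moreover have "states D = \<Union> \<pi>" using partition_onD1[OF partition_on_parts[OF assms(1,4)]] .
  ultimately show ?thesis by simp
qed

lemma meet_subset_image_Int: "meet \<pi> \<rho> \<subseteq> (\<lambda>(B, B'). B \<inter> B') ` (\<pi> \<times> \<rho>)"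
  unfolding meet_def by auto

lemma finite_meet: "finite \<pi> \<Longrightarrow> finite \<rho> \<Longrightarrow> finite (meet \<pi> \<rho>)"
  by (rule finite_subset[OF meet_subset_image_Int]) simp

lemma card_meet_le:
  assumes "finite \<pi>" "finite \<rho>"
  shows "card (meet \<pi> \<rho>) \<le> card \<pi> * card \<rho>"
proof -
  have "card (meet \<pi> \<rho>) \<le> card ((\<lambda>(B, B'). B \<inter> B') ` (\<pi> \<times> \<rho>))"
    using assms by (intro card_mono meet_subset_image_Int) auto
  also have "\<dots> \<le> card (\<pi> \<times> \<rho>)" by (rule card_image_le) (use assms in auto)
  finally show ?thesis by (simp add: card_cartesian_product)
qed

lemma finite_meet_list: "(\<And>\<pi>. \<pi> \<in> set \<pi>s \<Longrightarrow> finite \<pi>) \<Longrightarrow> finite (meet_list \<pi>s)"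
  by (induction \<pi>s rule: meet_list.induct) (simp_all add: finite_meet)

lemma card_meet_list_le:
  assumes "\<And>\<pi>. \<pi> \<in> set \<pi>s \<Longrightarrow> finite \<pi> \<and> real (card \<pi>) \<le> M"
  shows "real (card (meet_list \<pi>s)) \<le> M ^ length \<pi>s"
  using assms
proof (induction \<pi>s rule: meet_list.induct)
  case (3 \<pi> \<rho> \<pi>s)
  let ?R = "meet_list (\<rho> # \<pi>s)"
  have \<pi>: "finite \<pi>" "real (card \<pi>) \<le> M" using "3.prems" by auto
  have R: "finite ?R" using "3.prems" by (intro finite_meet_list) auto
  have IH: "real (card ?R) \<le> M ^ length (\<rho> # \<pi>s)" using "3.prems" by (intro "3.IH") auto
  have "real (card (meet \<pi> ?R)) \<le> real (card \<pi> * card ?R)"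
    using card_meet_le[OF \<pi>(1) R] by linarith
  also have "\<dots> \<le> M * M ^ length (\<rho> # \<pi>s)"
    using \<pi>(2) IH by (simp add: mult_mono)
  finally show ?case by simp
qed simp_all

lemma state_complexity_le_if_perfect_power_dev:
  assumes "is_asd D" "states D \<noteq> {}" "perfect (power_dev D k)"
  shows "state_complexity D \<le> real k * capacity D"
proof -
  obtain \<pi>s where \<pi>s: "length \<pi>s = k" "set \<pi>s \<subseteq> parts D" "(\<lambda>s. {s}) ` states D = meet_list \<pi>s"
    using assms(3) by (auto simp: perfect_def power_dev_def states_def parts_def)
  have "real (card (meet_list \<pi>s)) \<le> (2 powr capacity D) ^ length \<pi>s"
  proof (rule card_meet_list_le)
    fix \<pi> assume "\<pi> \<in> set \<pi>s"
    then have "\<pi> \<in> parts D" using \<pi>s(2) by blast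
    then show "finite \<pi> \<and> real (card \<pi>) \<le> 2 powr capacity D"
      using finite_part[OF assms(1)] card_part_le_powr_capacity[OF assms(1) _ assms(2)] by blast
  qed
  moreover have "card (states D) = card (meet_list \<pi>s)"
    by (simp flip: \<pi>s(3) add: card_image)
  moreover have "0 < card (states D)"
    using assms(1,2) by (simp add: is_asd_def card_gt_0_iff)
  ultimately have "log 2 (real (card (states D))) \<le> log 2 ((2 powr capacity D) ^ k)"
    using \<pi>s(1) by (subst log_le_cancel_iff) auto
  also have "\<dots> = real k * capacity D" by (simp add: log_nat_power)
  finally show ?thesis using state_complexity_le_log_card_states[OF assms(1)] by simp
qed

theorem proposition5:
  fixes D :: "'s asd"
  assumes "is_asd D" and "states D \<noteq> {}" and "parts D \<noteq> {}"
  shows "ereal (state_complexity D) \<le> perf_index D * ereal (capacity D)"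
proof (cases "\<exists>k\<ge>1. perfect (power_dev D k)")
  case True
  define k where "k = (LEAST k. k \<ge> 1 \<and> perfect (power_dev D k))"
  have "perfect (power_dev D k)"
    using LeastI_ex[OF True] unfolding k_def by blast
  then have "state_complexity D \<le> real k * capacity D"
    using state_complexity_le_if_perfect_power_dev assms(1,2) by blast
  then show ?thesis using True by (simp add: perf_index_def k_def)
next
  case False
  then have "perf_index D = \<infinity>" by (simp add: perf_index_def)
  consider "capacity D = 0" | "capacity D > 0"
    using capacity_nonneg[OF assms] by linarith
  then show ?thesis
  proof cases
    case 1 \<comment> \<open>\<open>\<infinity> * 0 = 0\<close> in \<open>ereal\<close>\<close>
    obtain s where "s \<in> states D" using assms(2) by blast
    then have "state_complexity D \<le> 0"
      by (rule state_complexity_le_zero_if_parts_trivial[OF assms(1)])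
        (rule part_eq_states_if_capacity_zero[OF assms(1,2) 1])
    then show ?thesis using \<open>perf_index D = \<infinity>\<close> 1 by (simp add: zero_ereal_def[symmetric])
  next
    case 2
    then show ?thesis using \<open>perf_index D = \<infinity>\<close> by simp
  qed
qed

end
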